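(* Let $(V,g)$ be a Euclidean vector space and $\mathfrak{g}\subseteq\mathfrak{so}(V)$ a Lie subalgebra such that the map $\varepsilon^{\perp}:\Lambda^3V\to\Lambda^1V\otimes\mathfrak{g}^{\perp}$, $\varepsilon^\perp(T)_X=(X\lrcorner T)_{\mathfrak{g}^{\perp}}$, is surjective. Then the representation $(\mathfrak{g},V)$ is irreducible.
   Context: $\Lambda^2V$ is identified with $\mathfrak{so}(V)$ via $F\mapsto g(F\cdot,\cdot)$; $\mathfrak{g}^\perp$ is the orthogonal complement of $\mathfrak{g}$ in $\Lambda^2V$, and $(\cdot)_{\mathfrak{g}^\perp}$ the orthogonal projection onto it. *)

theory Defs
  imports "HOL-Analysis.Analysis"
begin

text \<open>so(V): skew-adjoint endomorphisms of the Euclidean space V (identified with Lambda^2 V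
  via F |-> g(F .,.)).\<close>
definition so_V :: "('a::euclidean_space \<Rightarrow> 'a) set" where
  "so_V = {F. linear F \<and> (\<forall>x y. inner (F x) y = - inner x (F y))}"

text \<open>The standard inner product on Lambda^2 V = so(V) (up to a positive constant):
  sum over an orthonormal basis.\<close>
definition ip2 :: "('a::euclidean_space \<Rightarrow> 'a) \<Rightarrow> ('a \<Rightarrow> 'a) \<Rightarrow> real" where
  "ip2 F G = (\<Sum>b\<in>Basis. inner (F b) (G b))"

definition lie_subalgebra :: "('a::euclidean_space \<Rightarrow> 'a) set \<Rightarrow> bool" where
  "lie_subalgebra g \<longleftrightarrow> g \<subseteq> so_V \<and> (\<lambda>x. 0) \<in> g
     \<and> (\<forall>F\<in>g. \<forall>G\<in>g. (\<lambda>x. F x + G x) \<in> g)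
     \<and> (\<forall>c. \<forall>F\<in>g. (\<lambda>x. c *\<^sub>R F x) \<in> g)
     \<and> (\<forall>F\<in>g. \<forall>G\<in>g. (\<lambda>x. F (G x) - G (F x)) \<in> g)"

definition perp2 :: "('a::euclidean_space \<Rightarrow> 'a) set \<Rightarrow> ('a \<Rightarrow> 'a) set" where
  "perp2 g = {F\<in>so_V. \<forall>G\<in>g. ip2 F G = 0}"

definition proj_perp :: "('a::euclidean_space \<Rightarrow> 'a) set \<Rightarrow> ('a \<Rightarrow> 'a) \<Rightarrow> ('a \<Rightarrow> 'a)" where
  "proj_perp g F = (THE P. P \<in> perp2 g \<and> (\<lambda>x. F x - P x) \<in> g)"

text \<open>Lambda^3 V: alternating trilinear forms.\<close>
definition alt3 :: "('a::euclidean_space \<Rightarrow> 'a \<Rightarrow> 'a \<Rightarrow> real) \<Rightarrow> bool" where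
  "alt3 T \<longleftrightarrow> (\<forall>y z. linear (\<lambda>x. T x y z)) \<and> (\<forall>x z. linear (\<lambda>y. T x y z))
     \<and> (\<forall>x y. linear (\<lambda>z. T x y z))
     \<and> (\<forall>x y z. T x y z = - T y x z) \<and> (\<forall>x y z. T x y z = - T x z y)"

text \<open>Interior product X \<lrcorner> T, as the skew endomorphism F with g(F Y, Z) = T(X,Y,Z).\<close>
definition contr :: "'a::euclidean_space \<Rightarrow> ('a \<Rightarrow> 'a \<Rightarrow> 'a \<Rightarrow> real) \<Rightarrow> ('a \<Rightarrow> 'a)" where
  "contr X T = (\<lambda>Y. \<Sum>b\<in>Basis. T X Y b *\<^sub>R b)"

text \<open>epsilon-perp: Lambda^3 V -> Lambda^1 V (x) g-perp is surjective: every linear map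
  phi : V -> g-perp is of the form X |-> (X \<lrcorner> T)_{g-perp} for some T in Lambda^3 V.\<close>
definition eps_perp_surj :: "('a::euclidean_space \<Rightarrow> 'a) set \<Rightarrow> bool" where
  "eps_perp_surj g \<longleftrightarrow>
     (\<forall>\<phi> :: 'a \<Rightarrow> 'a \<Rightarrow> 'a. (\<forall>v. linear (\<lambda>X. \<phi> X v)) \<and> (\<forall>X. \<phi> X \<in> perp2 g) \<longrightarrow>
        (\<exists>T. alt3 T \<and> (\<forall>X. proj_perp g (contr X T) = \<phi> X)))"

text \<open>Irreducibility of the representation (g, V); V is nonzero since DIM('a) \<ge> 1.\<close>
definition irreducible_rep :: "('a::euclidean_space \<Rightarrow> 'a) set \<Rightarrow> bool" where
  "irreducible_rep g \<longleftrightarrow> (UNIV :: 'a set) \<noteq> {0} \<and>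
     (\<forall>W. subspace W \<and> (\<forall>F\<in>g. \<forall>w\<in>W. F w \<in> W) \<longrightarrow> W = {0} \<or> W = UNIV)"

end

theory Submission
  imports Defs
begin

(* Suppose W is a g-invariant subspace with 0 \<noteq> W \<noteq> V.  Pick a \<noteq> 0 in W
   and u \<noteq> 0 orthogonal to W.  For every G \<in> g we have <G a, u> = 0 = <a, G u>, so the
   2-form a \<and> u is orthogonal to g.  Hence \<phi>(X) = <a,X> (a \<and> u) is a linear map
   V \<rightarrow> g-perp, and surjectivity of \<epsilon>-perp yields T \<in> \<Lambda>\<^sup>3V with (X \<lrcorner> T) - \<phi>(X) \<in> g
   for all X.  Applying this element of g (with X = a) to a \<in> W and pairing with u gives
   T(a,a,u) - |a|\<^sup>4 |u|\<^sup>2 = 0, while T(a,a,u) = 0 by skew-symmetry: a contradiction. *)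


typedef (overloaded) ('a::euclidean_space) basis_index = "Basis :: 'a set"
  using nonempty_Basis by blast

instance basis_index :: (euclidean_space) finite
proof
  have "(UNIV :: 'a basis_index set) = Abs_basis_index ` Basis"
    using type_definition.Abs_image[OF type_definition_basis_index] by auto
  then show "finite (UNIV :: 'a basis_index set)"
    by (metis finite_Basis finite_imageI)
qed

lemma sum_basis_index:
  "(\<Sum>i\<in>UNIV. h (Rep_basis_index i)) = (\<Sum>b\<in>(Basis::'a::euclidean_space set). h b)"
proof -
  have "inj (Rep_basis_index :: 'a basis_index \<Rightarrow> 'a)"
    by (meson Rep_basis_index_inject injI)
  then have "sum h (Rep_basis_index ` (UNIV :: 'a basis_index set))
      = sum (h \<circ> Rep_basis_index) UNIV"
    by (simp add: sum.reindex)
  moreover have "Rep_basis_index ` (UNIV :: 'a basis_index set) = Basis"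
    using type_definition.Rep_range[OF type_definition_basis_index] by simp
  ultimately show ?thesis by simp
qed

text \<open>Coordinates of an endomorphism: the tuple of its values on the basis.  This is a
  vector in a Euclidean space whose inner product is exactly the pairing ip2.\<close>
definition coords :: "('a::euclidean_space \<Rightarrow> 'a) \<Rightarrow> 'a ^ 'a basis_index" where
  "coords F = (\<chi> i. F (Rep_basis_index i))"

lemma inner_coords: "inner (coords F) (coords G) = ip2 F G"
  using sum_basis_index[of "\<lambda>b. inner (F b) (G b)"]
  by (simp add: coords_def inner_vec_def ip2_def)

lemma coords_diff: "coords (\<lambda>x. F x - G x) = coords F - coords G"
  by (simp add: coords_def vec_eq_iff)

lemma coords_eq_imp_eq:
  assumes "linear F" "linear G" "coords F = coords G"
  shows "F = G"
proof (rule linear_eq_stdbasis[OF assms(1,2)])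
  fix b :: 'a assume "b \<in> Basis"
  then obtain i where "b = Rep_basis_index i"
    using Rep_basis_index_cases by blast
  then show "F b = G b"
    using assms(3) by (simp add: coords_def vec_eq_iff)
qed

lemma lie_subalgebra_coords_subspace:
  assumes "lie_subalgebra g"
  shows "subspace (coords ` g)"
proof -
  have zero: "(\<lambda>x. 0) \<in> g"
    and add: "\<And>F G. F \<in> g \<Longrightarrow> G \<in> g \<Longrightarrow> (\<lambda>x. F x + G x) \<in> g"
    and scale: "\<And>c F. F \<in> g \<Longrightarrow> (\<lambda>x. c *\<^sub>R F x) \<in> g"
    using assms unfolding lie_subalgebra_def by auto
  show ?thesis
    unfolding subspace_def
  proof (intro conjI ballI allI)
    have "coords (\<lambda>x. 0) = 0"
      by (simp add: coords_def vec_eq_iff)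
    then show "0 \<in> coords ` g"
      by (metis zero image_eqI)
  next
    fix x y assume "x \<in> coords ` g" "y \<in> coords ` g"
    then obtain F G where "F \<in> g" "G \<in> g" "x = coords F" "y = coords G" by blast
    moreover have "coords (\<lambda>x. F x + G x) = coords F + coords G"
      by (simp add: coords_def vec_eq_iff)
    ultimately show "x + y \<in> coords ` g"
      by (metis add image_eqI)
  next
    fix c x assume "x \<in> coords ` g"
    then obtain F where "F \<in> g" "x = coords F" by blast
    moreover have "coords (\<lambda>x. c *\<^sub>R F x) = c *\<^sub>R coords F"
      by (simp add: coords_def vec_eq_iff)
    ultimately show "c *\<^sub>R x \<in> coords ` g"
      by (metis scale image_eqI)
  qed
qed

lemma so_V_diff:
  assumes "F \<in> so_V" "G \<in> so_V"
  shows "(\<lambda>x. F x - G x) \<in> so_V"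
  using assms unfolding so_V_def
  by (auto simp: linear_compose_sub inner_diff_left inner_diff_right)

lemma perp_decomposition_exists:
  assumes g_so: "g \<subseteq> so_V" and g_sub: "subspace (coords ` g)" and F: "F \<in> so_V"
  obtains P where "P \<in> perp2 g" "(\<lambda>x. F x - P x) \<in> g"
proof -
  have span_g: "span (coords ` g) = coords ` g"
    using g_sub by (simp add: span_eq_iff)
  obtain y z where y: "y \<in> coords ` g" and z: "\<And>w. w \<in> coords ` g \<Longrightarrow> orthogonal z w"
    and yz: "coords F = y + z"
    using orthogonal_subspace_decomp_exists[of "coords ` g" "coords F"] unfolding span_g by blast
  obtain G where G: "G \<in> g" "y = coords G" using y by blast
  define P where "P = (\<lambda>x. F x - G x)"
  have "P \<in> so_V"
    unfolding P_def using F G g_so by (intro so_V_diff) auto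
  moreover have "ip2 P H = 0" if "H \<in> g" for H
  proof -
    have "coords P = z"
      using yz G by (simp add: P_def coords_diff)
    then show ?thesis
      using z[of "coords H"] that by (simp add: orthogonal_def inner_coords[symmetric])
  qed
  moreover have "(\<lambda>x. F x - P x) = G"
    by (simp add: P_def)
  ultimately show ?thesis
    using that G unfolding perp2_def by auto
qed

lemma perp_decomposition_unique:
  assumes g_sub: "subspace (coords ` g)"
    and P1: "P1 \<in> perp2 g" "(\<lambda>x. F x - P1 x) \<in> g"
    and P2: "P2 \<in> perp2 g" "(\<lambda>x. F x - P2 x) \<in> g"
  shows "P1 = P2"
proof -
  define d where "d = coords P1 - coords P2"
  have "d = coords (\<lambda>x. F x - P2 x) - coords (\<lambda>x. F x - P1 x)"
    by (simp add: d_def coords_diff)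
  then have "d \<in> coords ` g"
    using P1(2) P2(2) g_sub by (simp add: subspace_diff)
  then obtain H where H: "H \<in> g" "d = coords H" by blast
  have "inner d d = ip2 P1 H - ip2 P2 H"
    by (simp add: H(2)[symmetric] inner_coords[symmetric]) (simp add: d_def inner_diff_left)
  also have "\<dots> = 0"
    using H(1) P1(1) P2(1) unfolding perp2_def by auto
  finally have "coords P1 = coords P2"
    by (simp add: d_def)
  moreover have "linear P1" "linear P2"
    using P1(1) P2(1) unfolding perp2_def so_V_def by auto
  ultimately show ?thesis
    by (simp add: coords_eq_imp_eq)
qed

lemma proj_perp_complement:
  assumes "g \<subseteq> so_V" "subspace (coords ` g)" "F \<in> so_V"
  shows "(\<lambda>x. F x - proj_perp g F x) \<in> g"
proof -
  have "\<exists>!P. P \<in> perp2 g \<and> (\<lambda>x. F x - P x) \<in> g"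
  proof (rule ex_ex1I)
    show "\<exists>P. P \<in> perp2 g \<and> (\<lambda>x. F x - P x) \<in> g"
      using perp_decomposition_exists[OF assms] by blast
  next
    fix P1 P2
    assume "P1 \<in> perp2 g \<and> (\<lambda>x. F x - P1 x) \<in> g" "P2 \<in> perp2 g \<and> (\<lambda>x. F x - P2 x) \<in> g"
    then show "P1 = P2"
      using perp_decomposition_unique[OF assms(2)] by blast
  qed
  then have "proj_perp g F \<in> perp2 g \<and> (\<lambda>x. F x - proj_perp g F x) \<in> g"
    unfolding proj_perp_def by (rule theI')
  then show ?thesis ..
qed

lemma perp2_scale:
  assumes "P \<in> perp2 g"
  shows "(\<lambda>x. c *\<^sub>R P x) \<in> perp2 g"
proof -
  have "ip2 (\<lambda>x. c *\<^sub>R P x) G = c * ip2 P G" for G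
    by (simp add: ip2_def sum_distrib_left)
  then show ?thesis
    using assms unfolding perp2_def so_V_def by (auto simp: real_vector.module_hom_scale)
qed

text \<open>The 2-form a \<and> u, viewed as the skew endomorphism Y \<mapsto> <a,Y> u - <u,Y> a.\<close>
definition wedge :: "'a::euclidean_space \<Rightarrow> 'a \<Rightarrow> ('a \<Rightarrow> 'a)" where
  "wedge a u = (\<lambda>Y. inner a Y *\<^sub>R u - inner u Y *\<^sub>R a)"

lemma wedge_so_V: "wedge a u \<in> so_V"
  unfolding so_V_def wedge_def
  by (auto intro!: linearI simp: algebra_simps inner_add_right inner_diff_left inner_diff_right
      inner_commute)

lemma ip2_wedge:
  assumes "linear G"
  shows "ip2 (wedge a u) G = inner u (G a) - inner a (G u)"
proof -
  have expand: "inner (G x) y = (\<Sum>b\<in>Basis. inner x b * inner y (G b))" for x y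
    using Linear_Algebra.linear_componentwise[OF assms, of x y] by (simp add: inner_commute)
  have "ip2 (wedge a u) G = (\<Sum>b\<in>Basis. inner a b * inner u (G b))
      - (\<Sum>b\<in>Basis. inner u b * inner a (G b))"
    by (simp add: ip2_def wedge_def inner_diff_left sum_subtractf)
  also have "\<dots> = inner (G a) u - inner (G u) a"
    by (simp only: expand)
  finally show ?thesis
    by (simp add: inner_commute)
qed

lemma wedge_in_perp2:
  assumes g_so: "g \<subseteq> so_V" and inv: "\<forall>G\<in>g. \<forall>w\<in>W. G w \<in> W"
    and a: "a \<in> W" and u: "\<forall>w\<in>W. inner u w = 0"
  shows "wedge a u \<in> perp2 g"
  unfolding perp2_def
proof (intro CollectI conjI ballI wedge_so_V)
  fix G assume G: "G \<in> g"
  then have "inner (G a) u = - inner a (G u)" and "linear G"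
    using g_so unfolding so_V_def by auto
  moreover have "inner u (G a) = 0"
    using G a inv u by blast
  ultimately show "ip2 (wedge a u) G = 0"
    by (simp add: ip2_wedge inner_commute)
qed

lemma inner_contr:
  assumes "alt3 T"
  shows "inner (contr X T Y) Z = T X Y Z"
proof -
  have lin: "linear (\<lambda>z. T X Y z)"
    using assms unfolding alt3_def by blast
  have "inner (contr X T Y) Z = (\<Sum>b\<in>Basis. T X Y b * inner b Z)"
    by (simp add: contr_def inner_sum_left)
  also have "\<dots> = (\<Sum>b\<in>Basis. T X Y (inner Z b *\<^sub>R b))"
    by (simp add: linear_scale[OF lin] inner_commute mult.commute)
  also have "\<dots> = T X Y Z"
    by (simp add: linear_sum[OF lin, symmetric] euclidean_representation)
  finally show ?thesis .
qed

lemma contr_so_V: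
  assumes T: "alt3 T"
  shows "contr X T \<in> so_V"
proof -
  have lin: "linear (\<lambda>y. T X y z)" and skew: "T X y z = - T X z y" for y z
    using T unfolding alt3_def by blast+
  have "linear (contr X T)"
  proof (rule linearI)
    show "contr X T (y + z) = contr X T y + contr X T z" for y z
      by (rule euclidean_eqI) (simp add: inner_contr[OF T] inner_add_left linear_add[OF lin])
    show "contr X T (c *\<^sub>R y) = c *\<^sub>R contr X T y" for c y
      by (rule euclidean_eqI) (simp add: inner_contr[OF T] linear_scale[OF lin])
  qed
  moreover have "inner (contr X T y) z = - inner y (contr X T z)" for y z
    using skew[of y z] by (simp add: inner_contr[OF T] inner_commute[of y])
  ultimately show ?thesis
    unfolding so_V_def by blast
qed

lemma proper_subspace_orthogonal_vector:
  fixes W :: "'a::euclidean_space set"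
  assumes W: "subspace W" and proper: "W \<noteq> UNIV"
  obtains u where "u \<noteq> 0" "\<forall>w\<in>W. inner u w = 0"
proof -
  have span_W: "span W = W"
    using W by (simp add: span_eq_iff)
  have "span W \<subset> span UNIV"
    using proper unfolding span_W span_UNIV by blast
  then obtain u where "u \<noteq> 0" "\<And>w. w \<in> span W \<Longrightarrow> orthogonal u w"
    by (rule orthogonal_to_subspace_exists_gen) blast
  then show ?thesis
    using that unfolding span_W orthogonal_def by blast
qed

lemma no_invariant_with_orthogonal_vector:
  assumes g_so: "g \<subseteq> so_V" and g_sub: "subspace (coords ` g)"
    and surj: "eps_perp_surj g"
    and inv: "\<forall>G\<in>g. \<forall>w\<in>W. G w \<in> W"
    and a: "a \<in> W" "a \<noteq> 0" and u: "u \<noteq> 0" "\<forall>w\<in>W. inner u w = 0"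
  shows False
proof -
  define \<phi> where "\<phi> = (\<lambda>X Y. inner a X *\<^sub>R wedge a u Y)"
  have "linear (\<lambda>X. \<phi> X v)" for v
    unfolding \<phi>_def by (intro linearI) (simp_all add: inner_add_right scaleR_add_left)
  moreover have "\<phi> X \<in> perp2 g" for X
    unfolding \<phi>_def using wedge_in_perp2[OF g_so inv a(1) u(2)] by (rule perp2_scale)
  ultimately have "\<exists>T. alt3 T \<and> (\<forall>X. proj_perp g (contr X T) = \<phi> X)"
    using surj unfolding eps_perp_surj_def by blast
  then obtain T where T: "alt3 T" and proj: "\<And>X. proj_perp g (contr X T) = \<phi> X"
    by blast
  have "(\<lambda>x. contr a T x - \<phi> a x) \<in> g"
    using proj_perp_complement[OF g_so g_sub contr_so_V[OF T], of a] unfolding proj .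
  then have "contr a T a - \<phi> a a \<in> W"
    using inv a(1) by (metis (no_types, lifting))
  then have "inner (contr a T a) u = inner (\<phi> a a) u"
    using u(2) inner_diff_left[of "contr a T a" "\<phi> a a" u] inner_commute[of u] by fastforce
  moreover have "inner (contr a T a) u = 0"
  proof -
    have "T a a u = - T a a u"
      using T unfolding alt3_def by blast
    then have "T a a u = 0"
      by linarith
    then show ?thesis
      by (simp add: inner_contr[OF T])
  qed
  moreover have "inner (\<phi> a a) u = inner a a * inner a a * inner u u"
  proof -
    have "inner u a = 0"
      using u(2) a(1) by blast
    then show ?thesis
      by (simp add: \<phi>_def wedge_def inner_diff_left)
  qed
  ultimately show False
    using a(2) u(1) by simp
qed

theorem lemma8p1:
  fixes g :: "('a::euclidean_space \<Rightarrow> 'a) set"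
  assumes "lie_subalgebra g"
    and "eps_perp_surj g"
  shows "irreducible_rep g"
  unfolding irreducible_rep_def
proof (intro conjI allI impI)
  have g_so: "g \<subseteq> so_V"
    using assms(1) unfolding lie_subalgebra_def by blast
  obtain b :: 'a where "b \<in> Basis"
    using nonempty_Basis by blast
  then show "(UNIV :: 'a set) \<noteq> {0}"
    using nonzero_Basis by blast
  fix W :: "'a set"
  assume "subspace W \<and> (\<forall>F\<in>g. \<forall>w\<in>W. F w \<in> W)"
  then have W: "subspace W" and inv: "\<forall>F\<in>g. \<forall>w\<in>W. F w \<in> W"
    by auto
  show "W = {0} \<or> W = UNIV"
  proof (rule ccontr)
    assume proper: "\<not> (W = {0} \<or> W = UNIV)"
    then obtain a where a: "a \<in> W" "a \<noteq> 0"
      using subspace_0[OF W] by blast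
    obtain u where "u \<noteq> 0" "\<forall>w\<in>W. inner u w = 0"
      using proper_subspace_orthogonal_vector[OF W] proper by blast
    then show False
      using no_invariant_with_orthogonal_vector[OF g_so lie_subalgebra_coords_subspace[OF assms(1)]
          assms(2) inv a] by blast
  qed
qed

end
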